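(* Let $X$ be a set, $\mathcal C\subseteq\mathcal P(X)$ closed under intersections (if $(K_i)_{i\in I}\subseteq\mathcal C$ then $\bigcap_{i\in I}K_i\in\mathcal C$), and $T:\mathcal C\to\mathcal C$ an order reversing quasi involution on $\mathcal C$. Fix $M_0\in\mathcal C$ and let $\mathcal C_0=\{K\cap M_0: K\in\mathcal C\}$. Then $\mathcal C_0\subseteq\mathcal C$, and the map $S:\mathcal C_0\to\mathcal C_0$ defined by $SK=TK\cap M_0$ is an order reversing quasi involution on $\mathcal C_0$.
   Context: $\mathcal P(X)$ is the power set of $X$. For $\mathcal D\subseteq\mathcal P(X)$, a map $T:\mathcal D\to\mathcal D$ is an order reversing quasi involution on $\mathcal D$ if for all $K,L\in\mathcal D$: (i) $K\subseteq TTK$, and (ii) $L\subseteq K$ implies $TK\subseteq TL$. *)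

theory Defs
  imports Main
begin

definition order_rev_quasi_inv :: "'a set set \<Rightarrow> ('a set \<Rightarrow> 'a set) \<Rightarrow> bool" where
  "order_rev_quasi_inv D T \<longleftrightarrow>
     (\<forall>K\<in>D. T K \<in> D) \<and>
     (\<forall>K\<in>D. K \<subseteq> T (T K)) \<and>
     (\<forall>K\<in>D. \<forall>L\<in>D. L \<subseteq> K \<longrightarrow> T K \<subseteq> T L)"

end

theory Submission
  imports Defs
begin

lemma order_rev_quasi_invI:
  assumes "\<And>K. K \<in> D \<Longrightarrow> T K \<in> D"
    and "\<And>K. K \<in> D \<Longrightarrow> K \<subseteq> T (T K)"
    and "\<And>K L. K \<in> D \<Longrightarrow> L \<in> D \<Longrightarrow> L \<subseteq> K \<Longrightarrow> T K \<subseteq> T L"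
  shows "order_rev_quasi_inv D T"
  using assms unfolding order_rev_quasi_inv_def by blast

lemma
  assumes "order_rev_quasi_inv D T"
  shows order_rev_quasi_inv_mem: "K \<in> D \<Longrightarrow> T K \<in> D"
    and order_rev_quasi_inv_subset_twice: "K \<in> D \<Longrightarrow> K \<subseteq> T (T K)"
    and order_rev_quasi_inv_antimono: "K \<in> D \<Longrightarrow> L \<in> D \<Longrightarrow> L \<subseteq> K \<Longrightarrow> T K \<subseteq> T L"
  using assms unfolding order_rev_quasi_inv_def by (simp_all add: Ball_def)

lemma Int_mem_if_Inter_closed:
  assumes "C \<subseteq> Pow X"
    and "\<And>F. F \<subseteq> C \<Longrightarrow> X \<inter> \<Inter>F \<in> C"
    and "K \<in> C" and "M \<in> C"
  shows "K \<inter> M \<in> C"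
proof -
  have "X \<inter> \<Inter>{K, M} \<in> C"
    using assms(2)[of "{K, M}"] assms(3,4) by blast
  moreover have "X \<inter> \<Inter>{K, M} = K \<inter> M"
    using assms(1,3) by blast
  ultimately show ?thesis by simp
qed

lemma order_rev_quasi_inv_trace:
  assumes T: "order_rev_quasi_inv C T"
    and Int_closed: "\<And>K. K \<in> C \<Longrightarrow> K \<inter> M \<in> C"
  shows "order_rev_quasi_inv {K \<inter> M | K. K \<in> C} (\<lambda>K. T K \<inter> M)"
proof -
  have trace_subset: "{K \<inter> M | K. K \<in> C} \<subseteq> C"
    using Int_closed by blast
  show ?thesis
  proof (rule order_rev_quasi_invI)
    fix K assume "K \<in> {K \<inter> M | K. K \<in> C}"
    then have "T K \<in> C"
      using trace_subset order_rev_quasi_inv_mem[OF T] by blast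
    then show "T K \<inter> M \<in> {K \<inter> M | K. K \<in> C}"
      by blast
  next
    fix K assume K: "K \<in> {K \<inter> M | K. K \<in> C}"
    then have "K \<in> C" and "K \<subseteq> M"
      using trace_subset by blast+
    then have "T K \<in> C"
      using order_rev_quasi_inv_mem[OF T] by simp
    then have "T (T K) \<subseteq> T (T K \<inter> M)"
      using order_rev_quasi_inv_antimono[OF T] Int_closed by simp
    then show "K \<subseteq> T (T K \<inter> M) \<inter> M"
      using order_rev_quasi_inv_subset_twice[OF T \<open>K \<in> C\<close>] \<open>K \<subseteq> M\<close> by blast
  next
    fix K L
    assume "K \<in> {K \<inter> M | K. K \<in> C}" and "L \<in> {K \<inter> M | K. K \<in> C}" and "L \<subseteq> K"
    then have "T K \<subseteq> T L"
      using order_rev_quasi_inv_antimono[OF T] trace_subset by blast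
    then show "T K \<inter> M \<subseteq> T L \<inter> M"
      by blast
  qed
qed

theorem proposition8p13:
  fixes X :: "'a set" and C :: "'a set set" and T :: "'a set \<Rightarrow> 'a set" and M0 :: "'a set"
  assumes "C \<subseteq> Pow X"
    and "\<And>F. F \<subseteq> C \<Longrightarrow> X \<inter> \<Inter>F \<in> C"
    and "order_rev_quasi_inv C T"
    and "M0 \<in> C"
  shows "{K \<inter> M0 | K. K \<in> C} \<subseteq> C \<and>
         order_rev_quasi_inv {K \<inter> M0 | K. K \<in> C} (\<lambda>K. T K \<inter> M0)"
proof -
  have Int_closed: "\<And>K. K \<in> C \<Longrightarrow> K \<inter> M0 \<in> C"
    using Int_mem_if_Inter_closed[OF assms(1,2)] assms(4) by blast
  then have "{K \<inter> M0 | K. K \<in> C} \<subseteq> C"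
    by blast
  moreover have "order_rev_quasi_inv {K \<inter> M0 | K. K \<in> C} (\<lambda>K. T K \<inter> M0)"
    using order_rev_quasi_inv_trace[OF assms(3) Int_closed] .
  ultimately show ?thesis ..
qed

end
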